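(* There exists an invertible $19\times19$ binary matrix such that the corresponding linear kernel has partial distance sequence $(1,2,2,2,2,2,4,4,4,4,4,6,8,8,8,8,8,8,16)$. Consequently $E_{19}\ge\frac1{19}\sum_{i=0}^{18}\log_{19}D_{min}^{(i)}\approx0.49045$.
   Context: A kernel of dimension $\ell$ is a bijection $g:\{0,1\}^\ell\to\{0,1\}^\ell$; a linear kernel is $g({\bf u})={\bf u}G$ over $\mathbb{F}_2$ for an invertible $\ell\times\ell$ binary matrix $G$. ${\bf a}\bullet{\bf b}$ denotes concatenation, $d_H$ Hamming distance. Partial distances: $D_{min}^{(i)}=\min\{d_H(g({\bf w}\bullet 0\bullet{\bf u}),g({\bf w}\bullet 1\bullet {\bf v})) : {\bf w}\in\{0,1\}^i,\ {\bf u},{\bf v}\in\{0,1\}^{\ell-i-1}\}$, $i=0,\dots,\ell-1$; exponent $E(g)=\frac1\ell\sum_{i}\log_\ell D_{min}^{(i)}$; $E_\ell=\max_g E(g)$ over all kernels of dimension $\ell$. *)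

theory Defs
  imports Complex_Main "HOL-Library.Z2" "Jordan_Normal_Form.Matrix"
begin

definition hamming :: "bit vec \<Rightarrow> bit vec \<Rightarrow> nat" where
  "hamming x y = card {k. k < dim_vec x \<and> x $ k \<noteq> y $ k}"

definition is_kernel :: "nat \<Rightarrow> (bit vec \<Rightarrow> bit vec) \<Rightarrow> bool" where
  "is_kernel l g \<longleftrightarrow> bij_betw g (carrier_vec l) (carrier_vec l)"

definition linear_kernel :: "bit mat \<Rightarrow> bit vec \<Rightarrow> bit vec" where
  "linear_kernel G u = vec (dim_col G) (\<lambda>j. \<Sum>i<dim_vec u. u $ i * G $$ (i, j))"

definition partial_distance :: "nat \<Rightarrow> (bit vec \<Rightarrow> bit vec) \<Rightarrow> nat \<Rightarrow> nat" where
  "partial_distance l g i = Min {hamming (g (w @\<^sub>v vCons 0 u)) (g (w @\<^sub>v vCons 1 v)) | w u v.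
      w \<in> carrier_vec i \<and> u \<in> carrier_vec (l - i - 1) \<and> v \<in> carrier_vec (l - i - 1)}"

definition kernel_exponent :: "nat \<Rightarrow> (bit vec \<Rightarrow> bit vec) \<Rightarrow> real" where
  "kernel_exponent l g = (1 / real l) * (\<Sum>i<l. log (real l) (real (partial_distance l g i)))"

definition max_exponent :: "nat \<Rightarrow> real" where
  "max_exponent l = Max {kernel_exponent l g | g. is_kernel l g}"

end

theory Submission
  imports Defs "Jordan_Normal_Form.Determinant"
begin

text \<open>
  For the linear kernel u |-> u G with rows R_0, ..., R_(l-1), the two words compared in D^(i)
  differ by (0, ..., 0, 1, u + v) G, so D^(i) is the minimum weight of the coset
  R_i + span(R_(i+1), ..., R_(l-1)). For the explicit 19 x 19 matrix the row R_i itself has the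
  claimed weight, and the lower bounds come from parity checks: the all-ones vector makes every
  coset with i >= 1 even, a vector orthogonal to R_(i+1), ... but not to R_i excludes the zero
  word for i <= 10, and a set of checks on span(R_6, ..., R_18) with pairwise distinct columns
  excludes weight 2 for 6 <= i <= 10; the cosets with i >= 11 have at most 2^7 words and are
  enumerated. Positive partial distances force the kernel to be injective, so G is invertible,
  the linear kernel is a kernel, and its exponent is a lower bound for E_19.
\<close>

section \<open>Binary words: weights, linear combinations and parity checks\<close>

(* The library simp rules rewrite + and * on bit into xor and and; keep the field operations. *)
declare add_bit_eq_xor [simp del] mult_bit_eq_and [simp del]

definition weight :: "bit list \<Rightarrow> nat" where
  "weight xs = length (filter (\<lambda>b. b = 1) xs)"

definition dot :: "bit list \<Rightarrow> bit list \<Rightarrow> bit" where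
  "dot h x = sum_list (map2 (*) h x)"

fun lincomb :: "bit list \<Rightarrow> bit list list \<Rightarrow> bit list \<Rightarrow> bit list" where
  "lincomb acc (r # rs) (c # cs) = lincomb (if c = 0 then acc else map2 (+) acc r) rs cs"
| "lincomb acc _ _ = acc"

lemma UNIV_bit: "(UNIV :: bit set) = {0, 1}"
  using bit.exhaust by auto

lemma finite_UNIV_bit [simp]: "finite (UNIV :: bit set)"
  by (simp add: UNIV_bit)

lemma bit_neq_iff_add_eq_1: "x \<noteq> y \<longleftrightarrow> x + y = (1 :: bit)"
  by (cases x; cases y) auto

lemma bit_add_self [simp]: "x + x = (0 :: bit)"
  by (cases x) simp_all

lemma nth_mem_drop: "n \<le> i \<Longrightarrow> i < length xs \<Longrightarrow> xs ! i \<in> set (drop n xs)"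
  using nth_mem[of "i - n" "drop n xs"] by simp

lemma weight_eq_card: "weight xs = card {k. k < length xs \<and> xs ! k = 1}"
  by (simp add: weight_def length_filter_conv_card)

lemma length_lincomb:
  "\<forall>r\<in>set rs. length r = length acc \<Longrightarrow> length (lincomb acc rs cs) = length acc"
  by (induction acc rs cs rule: lincomb.induct) auto

lemma nth_lincomb:
  assumes "\<forall>r\<in>set rs. length r = length acc" "length cs = length rs" "k < length acc"
  shows "lincomb acc rs cs ! k = acc ! k + (\<Sum>j<length rs. cs ! j * rs ! j ! k)"
  using assms
proof (induction acc rs cs rule: lincomb.induct)
  case (1 acc r rs c cs)
  have "(if c = 0 then acc else map2 (+) acc r) ! k = acc ! k + c * r ! k"
    using "1.prems" by auto
  moreover have "lincomb acc (r # rs) (c # cs) = lincomb (if c = 0 then acc else map2 (+) acc r) rs cs"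
    by simp
  ultimately show ?case
    using "1.IH" "1.prems"
    by (simp only: length_Cons sum.lessThan_Suc_shift nth_Cons_0 nth_Cons_Suc add.assoc) simp
qed auto

lemma lincomb_replicate_0: "lincomb acc rs (replicate n 0) = acc"
proof (induction rs arbitrary: n)
  case (Cons r rs)
  then show ?case by (cases n) auto
qed simp

fun coset_weight_ge :: "nat \<Rightarrow> bit list \<Rightarrow> bit list list \<Rightarrow> bool" where
  "coset_weight_ge d acc [] \<longleftrightarrow> d \<le> weight acc"
| "coset_weight_ge d acc (r # rs) \<longleftrightarrow> coset_weight_ge d acc rs \<and> coset_weight_ge d (map2 (+) acc r) rs"

lemma coset_weight_ge_lincomb:
  "coset_weight_ge d acc rs \<Longrightarrow> length cs = length rs \<Longrightarrow> d \<le> weight (lincomb acc rs cs)"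
proof (induction rs arbitrary: acc cs)
  case (Cons r rs)
  then show ?case by (cases cs) auto
qed simp

lemma dot_Cons: "dot (a # h) (b # x) = a * b + dot h x"
  by (simp add: dot_def)

lemma dot_sum: "length h = length x \<Longrightarrow> dot h x = (\<Sum>k<length x. h ! k * x ! k)"
proof (induction h x rule: list_induct2)
  case (Cons a h b x)
  then show ?case
    by (simp only: dot_Cons length_Cons sum.lessThan_Suc_shift nth_Cons_0 nth_Cons_Suc)
qed (simp add: dot_def)

lemma dot_add:
  "length a = length h \<Longrightarrow> length b = length h \<Longrightarrow> dot h (map2 (+) a b) = dot h a + dot h b"
proof (induction h arbitrary: a b)
  case (Cons x h)
  then obtain y a' z b' where "a = y # a'" "b = z # b'"
    by (cases a; cases b) auto
  with Cons.prems have "dot h (map2 (+) a' b') = dot h a' + dot h b'"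
    by (intro Cons.IH) auto
  then show ?case
    unfolding \<open>a = y # a'\<close> \<open>b = z # b'\<close>
    by (simp only: list.map zip_Cons_Cons prod.case dot_Cons distrib_left add_ac)
qed (simp add: dot_def)

lemma dot_lincomb:
  assumes "length acc = length h" "\<forall>r\<in>set rs. length r = length h \<and> dot h r = 0"
  shows "dot h (lincomb acc rs cs) = dot h acc"
  using assms
proof (induction acc rs cs rule: lincomb.induct)
  case (1 acc r rs c cs)
  have r: "length r = length h" "dot h r = 0"
    using "1.prems" by auto
  show ?case
  proof (cases "c = 0")
    case False
    have "dot h (map2 (+) acc r) = dot h acc"
      using dot_add[of acc h r] r "1.prems"(1) by simp
    with False r "1.IH" "1.prems" show ?thesis by simp
  qed (use "1.IH" "1.prems" in simp)
qed auto

lemma dot_replicate_1: "dot (replicate (length x) 1) x = of_nat (weight x)"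
proof (induction x)
  case (Cons b x)
  then show ?case by (cases b) (simp_all add: dot_Cons weight_def)
qed (simp add: dot_def weight_def)

lemma of_nat_bit_eq_0_iff: "(of_nat n :: bit) = 0 \<longleftrightarrow> even n"
  by (induction n) auto

lemma even_weight_if_dot_ones: "dot (replicate (length x) 1) x = 0 \<Longrightarrow> even (weight x)"
  by (simp add: dot_replicate_1 of_nat_bit_eq_0_iff)

lemma dot_zeros: "\<forall>b\<in>set x. b = 0 \<Longrightarrow> dot h x = 0"
proof (induction x arbitrary: h)
  case (Cons b x)
  then show ?case by (cases h) (simp_all add: dot_Cons dot_def)
qed (simp add: dot_def)

lemma weight_pos_if_dot_eq_1: "dot h x = 1 \<Longrightarrow> 0 < weight x"
  using dot_zeros[of x h] bit_not_one_iff by (fastforce simp: weight_def filter_empty_conv)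

lemma dot_weight_2:
  assumes "{k. k < length x \<and> x ! k = 1} = {a, b}" "a \<noteq> b" "length h = length x"
  shows "dot h x = h ! a + h ! b"
proof -
  let ?S = "{k. k < length x \<and> x ! k = 1}"
  have "dot h x = (\<Sum>k<length x. h ! k * x ! k)"
    using assms(3) by (rule dot_sum)
  also have "\<dots> = (\<Sum>k\<in>?S. h ! k * x ! k)"
    by (rule sum.mono_neutral_right) auto
  also have "\<dots> = h ! a * x ! a + h ! b * x ! b"
    using assms(1,2) by simp
  also have "\<dots> = h ! a + h ! b"
    using assms(1) by (metis (mono_tags) insertI1 insertI2 mem_Collect_eq mult_1_right)
  finally show ?thesis .
qed

lemma weight_ne_2_if_distinct_columns:
  assumes checks: "\<forall>p\<in>set P. length p = length x \<and> dot p x = 0"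
    and distinct: "distinct (map (\<lambda>k. map (\<lambda>p. p ! k) P) [0..<length x])"
  shows "weight x \<noteq> 2"
proof
  assume "weight x = 2"
  then obtain a b where ab: "{k. k < length x \<and> x ! k = 1} = {a, b}" "a \<noteq> b"
    by (auto simp: weight_eq_card card_2_iff)
  then have "a < length x" "b < length x"
    by blast+
  have "p ! a = p ! b" if "p \<in> set P" for p
  proof -
    have "p ! a + p ! b = 0"
      using checks that dot_weight_2[OF ab, of p] by simp
    then show ?thesis
      by (cases "p ! a"; cases "p ! b") simp_all
  qed
  then have "map (\<lambda>p. p ! a) P = map (\<lambda>p. p ! b) P"
    by simp
  with \<open>a < length x\<close> \<open>b < length x\<close> have "a = b"
    using nth_eq_iff_index_eq[OF distinct, of a b] by simp
  with ab(2) show False ..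
qed

section \<open>Partial distances of linear kernels\<close>

lemma dim_linear_kernel [simp]: "dim_vec (linear_kernel G x) = dim_col G"
  by (simp add: linear_kernel_def)

lemma hamming_eq_weight_add:
  assumes "dim_vec x = dim_vec y"
  shows "hamming x y = weight (list_of_vec (x + y))"
proof -
  have "{k. k < dim_vec x \<and> x $ k \<noteq> y $ k} = {k. k < length (list_of_vec (x + y)) \<and> list_of_vec (x + y) ! k = 1}"
    using assms by (auto simp: bit_neq_iff_add_eq_1 list_of_vec_index)
  then show ?thesis
    by (simp add: hamming_def weight_eq_card)
qed

lemma linear_kernel_add:
  assumes "dim_vec a = dim_vec b"
  shows "linear_kernel G (a + b) = linear_kernel G a + linear_kernel G b"
  using assms by (intro eq_vecI) (simp_all add: linear_kernel_def distrib_right sum.distrib)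

lemma append_vCons_add:
  assumes "dim_vec u = dim_vec v"
  shows "(w @\<^sub>v vCons 0 u) + (w @\<^sub>v vCons 1 v) = 0\<^sub>v (dim_vec w) @\<^sub>v vCons (1 :: bit) (u + v)"
  using assms by (intro eq_vecI) (auto simp: vec_index_vCons)

lemma list_of_vec_linear_kernel:
  assumes "dim_vec x = length R" "\<forall>r\<in>set R. length r = l"
  shows "list_of_vec (linear_kernel (mat_of_rows_list l R) x) = lincomb (replicate l 0) R (list_of_vec x)"
proof (rule nth_equalityI)
  show "length (list_of_vec (linear_kernel (mat_of_rows_list l R) x)) = length (lincomb (replicate l 0) R (list_of_vec x))"
    using assms by (simp add: linear_kernel_def mat_of_rows_list_def length_lincomb)
  fix k
  assume "k < length (list_of_vec (linear_kernel (mat_of_rows_list l R) x))"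
  then have k: "k < l"
    by (simp add: linear_kernel_def mat_of_rows_list_def)
  have "lincomb (replicate l 0) R (list_of_vec x) ! k = (\<Sum>j<length R. x $ j * R ! j ! k)"
    using assms k by (simp add: nth_lincomb list_of_vec_index)
  then show "list_of_vec (linear_kernel (mat_of_rows_list l R) x) ! k = lincomb (replicate l 0) R (list_of_vec x) ! k"
    using assms k by (simp add: linear_kernel_def mat_of_rows_list_def list_of_vec_index)
qed

lemma lincomb_replicate_0_append:
  "i \<le> length R \<Longrightarrow> lincomb acc R (replicate i 0 @ cs) = lincomb acc (drop i R) cs"
proof (induction i arbitrary: R)
  case (Suc i)
  then show ?case by (cases R) auto
qed simp

lemma map2_add_replicate_0: "map2 (+) (replicate (length r) 0) r = (r :: bit list)"
  by (induction r) simp_all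

lemma lincomb_unit_vector:
  assumes "i < length R" "length (R ! i) = l"
  shows "lincomb (replicate l 0) R (replicate i 0 @ 1 # cs) = lincomb (R ! i) (drop (Suc i) R) cs"
  using assms
  by (simp add: lincomb_replicate_0_append Cons_nth_drop_Suc[symmetric] map2_add_replicate_0[of "R ! i", simplified assms(2)])

lemma hamming_linear_kernel_rows:
  assumes R: "length R = l" "\<forall>r\<in>set R. length r = l" and i: "i < l"
    and w: "w \<in> carrier_vec i" and u: "u \<in> carrier_vec (l - i - 1)" and v: "v \<in> carrier_vec (l - i - 1)"
  shows "hamming (linear_kernel (mat_of_rows_list l R) (w @\<^sub>v vCons 0 u))
                 (linear_kernel (mat_of_rows_list l R) (w @\<^sub>v vCons 1 v))
       = weight (lincomb (R ! i) (drop (Suc i) R) (list_of_vec (u + v)))"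
proof -
  let ?G = "mat_of_rows_list l R" and ?a = "w @\<^sub>v vCons 0 u" and ?b = "w @\<^sub>v vCons 1 v"
  have "hamming (linear_kernel ?G ?a) (linear_kernel ?G ?b)
      = weight (list_of_vec (linear_kernel ?G ?a + linear_kernel ?G ?b))"
    by (rule hamming_eq_weight_add) simp
  also have "linear_kernel ?G ?a + linear_kernel ?G ?b = linear_kernel ?G (?a + ?b)"
    using u v by (simp add: linear_kernel_add)
  also have "?a + ?b = 0\<^sub>v i @\<^sub>v vCons 1 (u + v)"
    using w u v by (simp add: append_vCons_add)
  also have "list_of_vec (linear_kernel ?G (0\<^sub>v i @\<^sub>v vCons 1 (u + v)))
      = lincomb (replicate l 0) R (replicate i 0 @ 1 # list_of_vec (u + v))"
    using R i u v by (simp add: list_of_vec_linear_kernel)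
  also have "\<dots> = lincomb (R ! i) (drop (Suc i) R) (list_of_vec (u + v))"
    using R i by (simp add: lincomb_unit_vector)
  finally show ?thesis .
qed

lemma partial_distance_linear_kernel_rows:
  assumes R: "length R = l" "\<forall>r\<in>set R. length r = l" and i: "i < l"
  shows "partial_distance l (linear_kernel (mat_of_rows_list l R)) i
       = Min {weight (lincomb (R ! i) (drop (Suc i) R) cs) | cs. length cs = l - i - 1}"
proof -
  let ?g = "linear_kernel (mat_of_rows_list l R)"
  have "{hamming (?g (w @\<^sub>v vCons 0 u)) (?g (w @\<^sub>v vCons 1 v)) | w u v.
           w \<in> carrier_vec i \<and> u \<in> carrier_vec (l - i - 1) \<and> v \<in> carrier_vec (l - i - 1)}
      = {weight (lincomb (R ! i) (drop (Suc i) R) cs) | cs. length cs = l - i - 1}"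
    (is "?A = ?B")
  proof
    show "?A \<subseteq> ?B"
    proof
      fix d
      assume "d \<in> ?A"
      then obtain w u v where "w \<in> carrier_vec i" "u \<in> carrier_vec (l - i - 1)" "v \<in> carrier_vec (l - i - 1)"
        and "d = hamming (?g (w @\<^sub>v vCons 0 u)) (?g (w @\<^sub>v vCons 1 v))"
        by blast
      then show "d \<in> ?B"
        using hamming_linear_kernel_rows[OF R i] by fastforce
    qed
    show "?B \<subseteq> ?A"
    proof
      fix d
      assume "d \<in> ?B"
      then obtain cs where cs: "length cs = l - i - 1" "d = weight (lincomb (R ! i) (drop (Suc i) R) cs)"
        by blast
      let ?u = "0\<^sub>v (l - i - 1)" and ?v = "vec_of_list cs"
      have v: "?v \<in> carrier_vec (l - i - 1)"
        using cs(1) by (intro carrier_vecI) simp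
      have zero: "0\<^sub>v i \<in> carrier_vec i" "?u \<in> carrier_vec (l - i - 1)"
        by (rule zero_carrier_vec)+
      have "?u + ?v = ?v"
        by (rule left_zero_vec[OF v])
      with hamming_linear_kernel_rows[OF R i zero v] cs
      have "d = hamming (?g (0\<^sub>v i @\<^sub>v vCons 0 ?u)) (?g (0\<^sub>v i @\<^sub>v vCons 1 ?v))"
        by (simp only: list_vec)
      then show "d \<in> ?A"
        using zero v by blast
    qed
  qed
  then show ?thesis
    by (simp add: partial_distance_def)
qed

section \<open>Injective linear kernels and the exponent bound\<close>

lemma finite_carrier_vec_bit: "finite (carrier_vec n :: bit vec set)"
proof -
  have "carrier_vec n \<subseteq> vec_of_list ` {xs :: bit list. set xs \<subseteq> UNIV \<and> length xs = n}"
    by (auto intro!: image_eqI[of _ vec_of_list, OF vec_list[symmetric]])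
  moreover have "finite {xs :: bit list. set xs \<subseteq> UNIV \<and> length xs = n}"
    by (rule finite_lists_length_eq) simp
  ultimately show ?thesis
    using finite_surj by blast
qed

lemma partial_distance_le_hamming:
  assumes "w \<in> carrier_vec i" "u \<in> carrier_vec (l - i - 1)" "v \<in> carrier_vec (l - i - 1)"
  shows "partial_distance l g i \<le> hamming (g (w @\<^sub>v vCons 0 u)) (g (w @\<^sub>v vCons 1 v))"
proof -
  define d where "d = (\<lambda>(w, u, v). hamming (g (w @\<^sub>v vCons 0 u)) (g (w @\<^sub>v vCons 1 v)))"
  let ?C = "carrier_vec i \<times> carrier_vec (l - i - 1) \<times> carrier_vec (l - i - 1)"
  let ?S = "{hamming (g (w @\<^sub>v vCons 0 u)) (g (w @\<^sub>v vCons 1 v)) | w u v.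
      w \<in> carrier_vec i \<and> u \<in> carrier_vec (l - i - 1) \<and> v \<in> carrier_vec (l - i - 1)}"
  have "?S \<subseteq> d ` ?C"
  proof
    fix x
    assume "x \<in> ?S"
    then obtain w u v where "(w, u, v) \<in> ?C" "x = d (w, u, v)"
      by (auto simp: d_def)
    then show "x \<in> d ` ?C"
      by blast
  qed
  then have "finite ?S"
    by (rule finite_subset) (simp add: finite_carrier_vec_bit)
  with assms show ?thesis
    unfolding partial_distance_def by (intro Min_le) blast+
qed

lemma hamming_self [simp]: "hamming x x = 0"
  by (simp add: hamming_def)

lemma split_at_first_difference:
  fixes x y :: "bit vec"
  assumes x: "x \<in> carrier_vec l" and y: "y \<in> carrier_vec l" and "x \<noteq> y"
  obtains i w u v where "i < l" "w \<in> carrier_vec i" "u \<in> carrier_vec (l - i - 1)" "v \<in> carrier_vec (l - i - 1)"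
    "(x, y) = (w @\<^sub>v vCons 0 u, w @\<^sub>v vCons 1 v) \<or> (y, x) = (w @\<^sub>v vCons 0 u, w @\<^sub>v vCons 1 v)"
proof -
  have "\<exists>k<l. x $ k \<noteq> y $ k"
    using x y \<open>x \<noteq> y\<close> by (metis carrier_vecD eq_vecI)
  define i where "i = (LEAST k. k < l \<and> x $ k \<noteq> y $ k)"
  have i: "i < l" "x $ i \<noteq> y $ i"
    using LeastI_ex[OF \<open>\<exists>k<l. x $ k \<noteq> y $ k\<close>] by (simp_all add: i_def)
  have prefix: "x $ j = y $ j" if "j < i" for j
    using not_less_Least[OF that[unfolded i_def]] i(1) that by auto
  define w where "w = vec i (\<lambda>j. x $ j)"
  define rest where "rest z = vec (l - i - 1) (\<lambda>j. z $ (Suc i + j))" for z :: "bit vec"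
  have split: "z = w @\<^sub>v vCons (z $ i) (rest z)" if "z \<in> {x, y}" for z
    using that x y i(1) prefix by (intro eq_vecI) (auto simp: w_def rest_def vec_index_vCons)
  have carriers: "w \<in> carrier_vec i" "rest x \<in> carrier_vec (l - i - 1)" "rest y \<in> carrier_vec (l - i - 1)"
    by (simp_all add: w_def rest_def)
  consider "x $ i = 0" "y $ i = 1" | "x $ i = 1" "y $ i = 0"
    using i(2) by (cases "x $ i") simp_all
  then show thesis
  proof cases
    case 1
    then have "(x, y) = (w @\<^sub>v vCons 0 (rest x), w @\<^sub>v vCons 1 (rest y))"
      using split[of x] split[of y] by simp
    with i(1) carriers that[of i w "rest x" "rest y"] show thesis
      by blast
  next
    case 2
    then have "(y, x) = (w @\<^sub>v vCons 0 (rest y), w @\<^sub>v vCons 1 (rest x))"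
      using split[of x] split[of y] by simp
    with i(1) carriers that[of i w "rest y" "rest x"] show thesis
      by blast
  qed
qed

lemma inj_on_if_partial_distances_pos:
  assumes "\<forall>i<l. 0 < partial_distance l g i"
  shows "inj_on g (carrier_vec l)"
proof (rule inj_onI, rule ccontr)
  fix x y
  assume x: "x \<in> carrier_vec l" and y: "y \<in> carrier_vec l" and "g x = g y" "x \<noteq> y"
  obtain i w u v where "i < l" and w: "w \<in> carrier_vec i"
    and u: "u \<in> carrier_vec (l - i - 1)" and v: "v \<in> carrier_vec (l - i - 1)"
    and xy: "(x, y) = (w @\<^sub>v vCons 0 u, w @\<^sub>v vCons 1 v) \<or> (y, x) = (w @\<^sub>v vCons 0 u, w @\<^sub>v vCons 1 v)"
    by (rule split_at_first_difference[OF x y \<open>x \<noteq> y\<close>])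
  have "partial_distance l g i \<le> hamming (g x) (g y) \<or> partial_distance l g i \<le> hamming (g y) (g x)"
    using xy partial_distance_le_hamming[OF w u v, of g] by auto
  then show False
    using assms \<open>i < l\<close> \<open>g x = g y\<close> by auto
qed

lemma linear_kernel_eq_transpose_mult:
  assumes "G \<in> carrier_mat l l" "v \<in> carrier_vec l"
  shows "linear_kernel G v = transpose_mat G *\<^sub>v v"
  using assms by (intro eq_vecI) (auto simp: linear_kernel_def scalar_prod_def atLeast0LessThan mult.commute)

lemma invertible_mat_if_inj_linear_kernel:
  assumes G: "G \<in> carrier_mat l l" and inj: "inj_on (linear_kernel G) (carrier_vec l)"
  shows "invertible_mat G"
proof -
  have "det (transpose_mat G) \<noteq> 0"
  proof
    assume "det (transpose_mat G) = 0"
    then obtain v where v: "v \<in> carrier_vec l" "v \<noteq> 0\<^sub>v l" "transpose_mat G *\<^sub>v v = 0\<^sub>v l"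
      using det_0_iff_vec_prod_zero_field[of "transpose_mat G" l] G by auto
    moreover have "linear_kernel G (0\<^sub>v l) = 0\<^sub>v l"
      using G by (intro eq_vecI) (simp_all add: linear_kernel_def)
    ultimately have "linear_kernel G v = linear_kernel G (0\<^sub>v l)"
      using G by (simp add: linear_kernel_eq_transpose_mult)
    with inj v(1,2) show False
      by (meson inj_onD zero_carrier_vec)
  qed
  then have "det G \<noteq> 0"
    using G by (simp add: det_transpose)
  then obtain B where "B \<in> carrier_mat l l" "B * G = 1\<^sub>m l" "G * B = 1\<^sub>m l"
    using det_non_zero_imp_unit[OF G, of "()"] by (auto simp: Units_def ring_mat_def)
  with G show ?thesis
    by (auto simp: invertible_mat_def inverts_mat_def)
qed

lemma is_kernel_linear_kernel:
  assumes "G \<in> carrier_mat l l" "inj_on (linear_kernel G) (carrier_vec l)"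
  shows "is_kernel l (linear_kernel G)"
proof -
  have "linear_kernel G ` carrier_vec l \<subseteq> carrier_vec l"
    using assms(1) by (auto intro: carrier_vecI)
  then have "linear_kernel G ` carrier_vec l = carrier_vec l"
    using endo_inj_surj[OF finite_carrier_vec_bit] assms(2) by blast
  with assms(2) show ?thesis
    by (simp add: is_kernel_def bij_betw_def)
qed

lemma partial_distance_restrict:
  assumes "i < l"
  shows "partial_distance l (restrict g (carrier_vec l)) i = partial_distance l g i"
proof -
  have "restrict g (carrier_vec l) (w @\<^sub>v vCons b u) = g (w @\<^sub>v vCons b u)"
    if "w \<in> carrier_vec i" "u \<in> carrier_vec (l - i - 1)" for w u :: "bit vec" and b :: bit
    using that assms by (intro restrict_apply' carrier_vecI) auto
  then show ?thesis
    unfolding partial_distance_def by (simp cong: rev_conj_cong)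
qed

lemma kernel_exponent_le_max_exponent:
  assumes "is_kernel l g"
  shows "kernel_exponent l g \<le> max_exponent l"
proof -
  let ?C = "carrier_vec l :: bit vec set"
  \<comment> \<open>exponents only depend on the restriction to the finite carrier, so only finitely many occur\<close>
  have "{kernel_exponent l g | g. is_kernel l g} \<subseteq> kernel_exponent l ` (?C \<rightarrow>\<^sub>E ?C)"
  proof
    fix e
    assume "e \<in> {kernel_exponent l g | g. is_kernel l g}"
    then obtain g where "e = kernel_exponent l g" "is_kernel l g"
      by blast
    moreover have "kernel_exponent l (restrict g ?C) = kernel_exponent l g"
      by (simp add: kernel_exponent_def partial_distance_restrict)
    moreover have "restrict g ?C \<in> ?C \<rightarrow>\<^sub>E ?C"
      using \<open>is_kernel l g\<close> by (auto simp: is_kernel_def bij_betw_def)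
    ultimately show "e \<in> kernel_exponent l ` (?C \<rightarrow>\<^sub>E ?C)"
      by (metis image_eqI)
  qed
  moreover have "finite (?C \<rightarrow>\<^sub>E ?C)"
    by (simp add: finite_PiE finite_carrier_vec_bit)
  ultimately have "finite {kernel_exponent l g | g. is_kernel l g}"
    using finite_surj by blast
  with assms show ?thesis
    unfolding max_exponent_def by (intro Max_ge) blast+
qed

section \<open>The 19 \<times> 19 kernel\<close>

definition generator_rows :: "bit list list" where
  "generator_rows = [[0,0,0,0,0,0,0,0,0,0,0,0,0,1,0,0,0,0,0],
  [0,0,0,1,0,0,0,0,0,0,0,1,0,0,0,0,0,0,0],
  [0,0,0,0,0,0,1,0,0,0,0,1,0,0,0,0,0,0,0],
  [0,0,0,0,0,0,0,0,0,0,0,0,0,0,0,0,0,1,1],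
  [0,1,0,0,0,0,0,0,0,0,0,0,0,0,1,0,0,0,0],
  [0,0,1,0,0,0,0,0,0,0,0,0,1,0,0,0,0,0,0],
  [0,0,1,0,1,0,1,0,0,1,0,0,0,0,0,0,0,0,0],
  [0,0,0,0,0,1,0,1,0,1,0,0,1,0,0,0,0,0,0],
  [0,0,0,0,1,1,0,0,0,0,0,0,1,1,0,0,0,0,0],
  [0,0,0,0,0,0,1,0,0,0,1,0,0,0,0,1,0,0,1],
  [0,1,0,0,0,0,1,1,0,0,0,0,0,0,0,0,0,1,0],
  [0,0,0,0,1,0,0,1,0,0,0,1,1,0,0,0,1,0,1],
  [0,0,1,1,0,0,1,1,0,1,1,0,0,0,0,0,0,1,1],
  [0,1,0,1,0,1,0,1,1,0,1,0,0,0,0,0,1,1,0],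
  [1,1,0,1,1,0,0,0,0,1,0,0,0,1,1,1,0,0,0],
  [1,1,1,1,0,1,0,0,0,0,0,0,0,0,1,0,0,1,1],
  [1,0,0,1,1,1,0,1,0,1,0,1,0,0,0,0,0,1,0],
  [1,0,0,1,0,1,0,1,0,0,0,0,1,0,1,1,1,0,0],
  [1,1,0,1,1,0,1,0,1,1,1,1,1,1,1,1,1,1,1]]"

definition generator :: "bit mat" where
  "generator = mat_of_rows_list 19 generator_rows"

definition distance_profile :: "nat list" where
  "distance_profile = [1,2,2,2,2,2,4,4,4,4,4,6,8,8,8,8,8,8,16]"

definition pivot_checks :: "bit list list" where
  "pivot_checks = [replicate 19 1,
  [0,0,1,1,0,0,0,0,1,1,1,0,1,1,0,1,1,0,0],
  [1,1,1,0,1,0,0,1,0,0,0,1,1,0,1,0,0,0,0],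
  [1,0,0,0,1,0,1,0,1,0,0,1,0,1,0,1,0,1,0],
  [1,1,1,1,1,0,1,0,0,1,0,0,1,0,0,1,0,0,0],
  [1,0,0,0,0,1,1,1,1,1,1,0,1,0,0,0,0,0,0],
  [0,0,1,1,0,0,1,1,1,1,1,1,0,0,0,0,0,0,0],
  [1,0,1,1,1,1,1,1,0,1,1,0,0,0,0,0,0,0,0],
  [1,1,0,0,1,0,0,1,0,1,0,0,0,0,0,0,0,0,0],
  [0,1,1,0,0,0,1,0,1,0,0,0,0,1,0,0,0,0,0],
  [1,0,0,1,0,0,1,0,1,0,0,0,0,0,0,0,0,0,0]]"

definition separating_checks :: "bit list list" where
  "separating_checks = [[0,0,0,0,0,1,0,1,1,0,1,1,0,1,1,0,1,1,1],
  [0,0,0,0,1,0,0,0,1,1,0,0,1,0,1,1,1,0,1],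
  [0,0,0,1,0,0,1,1,0,1,0,1,0,0,1,1,0,0,0],
  [0,0,1,0,0,0,1,1,1,0,1,1,1,1,1,0,1,0,0],
  [0,1,0,0,0,0,0,0,0,0,1,1,0,0,0,1,1,1,0],
  [1,0,0,0,0,0,1,0,0,1,0,1,1,1,1,0,1,1,1]]"

lemma generator_rows_dims: "length generator_rows = 19" "\<forall>r\<in>set generator_rows. length r = 19"
  by (simp_all add: generator_rows_def)

lemma weight_generator_rows: "map weight generator_rows = distance_profile"
  by (simp add: generator_rows_def distance_profile_def weight_def)

lemma pivot_checks_dims: "length pivot_checks = 11" "\<forall>h\<in>set pivot_checks. length h = 19"
  by (simp_all add: pivot_checks_def)

lemma pivot_checks_orthogonal:
  assumes "i < 11"
  shows "dot (pivot_checks ! i) (generator_rows ! i) = 1"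
    "\<forall>r\<in>set (drop (Suc i) generator_rows). dot (pivot_checks ! i) r = 0"
proof -
  have "list_all (\<lambda>i. dot (pivot_checks ! i) (generator_rows ! i) = 1
      \<and> list_all (\<lambda>r. dot (pivot_checks ! i) r = 0) (drop (Suc i) generator_rows)) [0..<11]"
    by (simp add: pivot_checks_def generator_rows_def dot_def upt_rec numeral_eq_Suc)
  with assms show "dot (pivot_checks ! i) (generator_rows ! i) = 1"
    "\<forall>r\<in>set (drop (Suc i) generator_rows). dot (pivot_checks ! i) r = 0"
    by (simp_all add: list_all_iff)
qed

lemma separating_checks_orthogonal:
  "list_all (\<lambda>p. length p = 19 \<and> list_all (\<lambda>r. dot p r = 0) (drop 6 generator_rows)) separating_checks"
  by (simp add: separating_checks_def generator_rows_def dot_def)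

lemma separating_checks_distinct_columns:
  "distinct (map (\<lambda>k. map (\<lambda>p. p ! k) separating_checks) [0..<19])"
  by (simp add: separating_checks_def upt_rec)

lemma coset_weight_ge_generator_rows:
  assumes "11 \<le> i" "i < 19"
  shows "coset_weight_ge (distance_profile ! i) (generator_rows ! i) (drop (Suc i) generator_rows)"
proof -
  have "list_all (\<lambda>i. coset_weight_ge (distance_profile ! i) (generator_rows ! i)
      (drop (Suc i) generator_rows)) [11..<19]"
    by (simp add: generator_rows_def distance_profile_def weight_def upt_rec)
  then have "\<forall>j\<in>set [11..<19]. coset_weight_ge (distance_profile ! j) (generator_rows ! j)
      (drop (Suc j) generator_rows)"
    by (simp only: list_all_iff)
  moreover have "i \<in> set [11..<19]"
    using assms by (simp only: set_upt atLeastLessThan_iff)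
  ultimately show ?thesis
    by blast
qed

abbreviation coset_word :: "nat \<Rightarrow> bit list \<Rightarrow> bit list" where
  "coset_word i cs \<equiv> lincomb (generator_rows ! i) (drop (Suc i) generator_rows) cs"

lemma dot_coset_word:
  assumes "i < 19" "length h = 19" "\<forall>r\<in>set (drop (Suc i) generator_rows). dot h r = 0"
  shows "dot h (coset_word i cs) = dot h (generator_rows ! i)"
  using assms generator_rows_dims by (intro dot_lincomb) (auto dest: in_set_dropD)

lemma length_coset_word: "i < 19 \<Longrightarrow> length (coset_word i cs) = 19"
  using generator_rows_dims by (subst length_lincomb) (auto dest: in_set_dropD)

lemma coset_word_weight_pos:
  assumes "i < 11"
  shows "0 < weight (coset_word i cs)"
proof -
  let ?h = "pivot_checks ! i"
  note pivot_checks_orthogonal[OF assms]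
  moreover have "length ?h = 19"
    using pivot_checks_dims assms by simp
  ultimately have "dot ?h (coset_word i cs) = 1"
    using assms by (simp add: dot_coset_word)
  then show ?thesis
    by (rule weight_pos_if_dot_eq_1)
qed

lemma even_weight_coset_word:
  assumes "0 < i" "i < 19"
  shows "even (weight (coset_word i cs))"
proof -
  have ones: "\<forall>r\<in>set (drop 1 generator_rows). dot (replicate 19 1) r = 0"
    using pivot_checks_orthogonal(2)[of 0] by (simp add: pivot_checks_def)
  then have "dot (replicate 19 1) (coset_word i cs) = dot (replicate 19 1) (generator_rows ! i)"
    using assms set_drop_subset_set_drop[of 1 "Suc i" generator_rows]
    by (intro dot_coset_word) auto
  also have "\<dots> = 0"
    using ones assms generator_rows_dims nth_mem_drop[of 1 i generator_rows] by simp
  finally show ?thesis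
    using length_coset_word[OF assms(2)] even_weight_if_dot_ones by metis
qed

lemma coset_word_weight_ne_2:
  assumes "6 \<le> i" "i < 19"
  shows "weight (coset_word i cs) \<noteq> 2"
proof (rule weight_ne_2_if_distinct_columns)
  have rows: "generator_rows ! i \<in> set (drop 6 generator_rows)"
    "set (drop (Suc i) generator_rows) \<subseteq> set (drop 6 generator_rows)"
    using assms generator_rows_dims by (simp_all add: nth_mem_drop set_drop_subset_set_drop)
  show "\<forall>p\<in>set separating_checks. length p = length (coset_word i cs) \<and> dot p (coset_word i cs) = 0"
  proof
    fix p
    assume "p \<in> set separating_checks"
    then have p: "length p = 19" "\<forall>r\<in>set (drop 6 generator_rows). dot p r = 0"
      using separating_checks_orthogonal by (simp_all add: list_all_iff)
    then have "dot p (coset_word i cs) = dot p (generator_rows ! i)"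
      using rows assms by (intro dot_coset_word) auto
    with p rows assms show "length p = length (coset_word i cs) \<and> dot p (coset_word i cs) = 0"
      by (simp add: length_coset_word)
  qed
  show "distinct (map (\<lambda>k. map (\<lambda>p. p ! k) separating_checks) [0..<length (coset_word i cs)])"
    using separating_checks_distinct_columns assms by (simp add: length_coset_word)
qed

lemma distance_profile_le_coset_weight:
  assumes "i < 19" "length cs = 18 - i"
  shows "distance_profile ! i \<le> weight (coset_word i cs)"
proof -
  consider "i = 0" | "0 < i" "i < 6" | "6 \<le> i" "i < 11" | "11 \<le> i"
    by linarith
  then show ?thesis
  proof cases
    case 1
    then show ?thesis
      using coset_word_weight_pos[of 0 cs] by (simp add: distance_profile_def)
  next
    case 2
    then have "i \<in> {1, 2, 3, 4, 5}"
      by auto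
    then have "distance_profile ! i = 2"
      by (auto simp: distance_profile_def)
    moreover have "even (weight (coset_word i cs))" "0 < weight (coset_word i cs)"
      using 2 even_weight_coset_word coset_word_weight_pos by simp_all
    ultimately show ?thesis
      by (auto elim!: evenE)
  next
    case 3
    then have "i \<in> {6, 7, 8, 9, 10}"
      by auto
    then have "distance_profile ! i = 4"
      by (auto simp: distance_profile_def)
    moreover have "even (weight (coset_word i cs))" "0 < weight (coset_word i cs)"
      "weight (coset_word i cs) \<noteq> 2"
      using 3 even_weight_coset_word coset_word_weight_pos coset_word_weight_ne_2 by simp_all
    ultimately show ?thesis
      by (auto elim!: evenE)
  next
    case 4
    with assms show ?thesis
      using coset_weight_ge_generator_rows generator_rows_dims by (intro coset_weight_ge_lincomb) simp_all
  qed
qed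

lemma partial_distance_generator:
  assumes "i < 19"
  shows "partial_distance 19 (linear_kernel generator) i = distance_profile ! i"
proof -
  have "partial_distance 19 (linear_kernel generator) i
      = Min {weight (coset_word i cs) | cs. length cs = 19 - i - 1}"
    unfolding generator_def using generator_rows_dims assms by (rule partial_distance_linear_kernel_rows)
  also have "\<dots> = distance_profile ! i"
  proof (rule Min_eqI)
    show "finite {weight (coset_word i cs) | cs. length cs = 19 - i - 1}"
      using finite_lists_length_eq[of "UNIV :: bit set" "19 - i - 1"] by simp
    show "distance_profile ! i \<le> d" if "d \<in> {weight (coset_word i cs) | cs. length cs = 19 - i - 1}" for d
      using that assms distance_profile_le_coset_weight by auto
    have "weight (coset_word i (replicate (19 - i - 1) 0)) = distance_profile ! i"
      using weight_generator_rows nth_map[of i generator_rows weight] generator_rows_dims assms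
      by (simp add: lincomb_replicate_0)
    then show "distance_profile ! i \<in> {weight (coset_word i cs) | cs. length cs = 19 - i - 1}"
      by (metis (mono_tags) length_replicate mem_Collect_eq)
  qed
  finally show ?thesis .
qed

theorem mainTheorem17:
  defines "D \<equiv> [1,2,2,2,2,2,4,4,4,4,4,6,8,8,8,8,8,8,16] :: nat list"
  shows "(\<exists>G :: bit mat. G \<in> carrier_mat 19 19 \<and> invertible_mat G \<and>
            (\<forall>i<19. partial_distance 19 (linear_kernel G) i = D ! i))
       \<and> max_exponent 19 \<ge> (1 / 19) * (\<Sum>i<19. log 19 (real (D ! i)))"
proof -
  have D: "D = distance_profile"
    by (simp add: D_def distance_profile_def)
  have profile: "\<forall>i<19. partial_distance 19 (linear_kernel generator) i = D ! i"
    using partial_distance_generator by (simp add: D)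
  have "0 < D ! i" if "i < 19" for i
    using that nth_mem[of i D] by (auto simp: D_def)
  then have inj: "inj_on (linear_kernel generator) (carrier_vec 19)"
    using profile by (intro inj_on_if_partial_distances_pos) simp
  have G: "generator \<in> carrier_mat 19 19"
    by (simp add: generator_def mat_of_rows_list_def generator_rows_dims)
  have "kernel_exponent 19 (linear_kernel generator) \<le> max_exponent 19"
    using is_kernel_linear_kernel[OF G inj] by (rule kernel_exponent_le_max_exponent)
  then show ?thesis
    using G invertible_mat_if_inj_linear_kernel[OF G inj] profile
    by (auto simp: kernel_exponent_def)
qed

end
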